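(* Let $n,p$ be positive integers such that $p$ is odd and $n$ and $n+p$ are relatively prime, and let $\gamma_{n,p}(t)=(\sin(nt),\sin((n+p)t))$ for $t\in\mathbb{R}$. Then for every polynomial $P\in\Pi_{8n+4p-1}$ with $\langle P, T_{2(n+p)}(x)T_{2n}(y)\rangle=0$, \[ \frac{1}{\pi^2}\int_{-1}^1\int_{-1}^1 P(x,y)\frac{1}{\sqrt{1-x^2}}\frac{1}{\sqrt{1-y^2}}\,dx\,dy=\frac{1}{2\pi}\int_0^{2\pi}P(\gamma_{n,p}(t))\,dt. \]
   Context: $T_i(x)=\cos(i\arccos x)$ denotes the Chebyshev polynomial of the first kind of degree $i$. For $N\ge 0$, $\Pi_N=\operatorname{span}\{T_i(x)T_j(y): i,j\in\mathbb{N}_0,\ i+j\le N\}$ is the space of bivariate polynomials of total degree at most $N$. The inner product is $\langle f,g\rangle=\frac{1}{\pi^2}\int_{-1}^1\int_{-1}^1 f(x,y)\overline{g(x,y)}\frac{1}{\sqrt{1-x^2}}\frac{1}{\sqrt{1-y^2}}\,dx\,dy$. *)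

theory Defs
  imports "HOL-Analysis.Analysis"
begin

definition cheb :: "nat \<Rightarrow> real \<Rightarrow> real" where
  "cheb i x = cos (real i * arccos x)"

definition PiN :: "nat \<Rightarrow> (real \<Rightarrow> real \<Rightarrow> complex) set" where
  "PiN N = {P. \<exists>c :: nat \<Rightarrow> nat \<Rightarrow> complex.
      P = (\<lambda>x y. \<Sum>(i,j)\<in>{(i,j). i + j \<le> N}. c i j * complex_of_real (cheb i x * cheb j y))}"

definition cheb_weight :: "real \<Rightarrow> real \<Rightarrow> real" where
  "cheb_weight x y = 1 / sqrt (1 - x\<^sup>2) * (1 / sqrt (1 - y\<^sup>2))"

definition cheb_ip :: "(real \<Rightarrow> real \<Rightarrow> complex) \<Rightarrow> (real \<Rightarrow> real \<Rightarrow> complex) \<Rightarrow> complex" where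
  "cheb_ip f g = complex_of_real (1 / pi\<^sup>2) *
     (LINT z : {-1..1} \<times> {-1..1} | lborel.
        f (fst z) (snd z) * cnj (g (fst z) (snd z)) * complex_of_real (cheb_weight (fst z) (snd z)))"

definition gamma_np :: "nat \<Rightarrow> nat \<Rightarrow> real \<Rightarrow> real \<times> real" where
  "gamma_np n p t = (sin (real n * t), sin (real (n + p) * t))"

end

theory Submission
  imports Defs
begin

text \<open>Expand \<open>P = \<Sum> c\<^sub>i\<^sub>j T\<^sub>i(x) T\<^sub>j(y)\<close>. The tensor Chebyshev basis is orthogonal for the
  Chebyshev weight, so the left-hand side is \<open>c\<^sub>0\<^sub>0\<close> and the hypothesis says
  \<open>c\<^sub>a\<^sub>b = 0\<close> for \<open>(a, b) = (2(n+p), 2n)\<close>. Along the curve,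
  \<open>T\<^sub>i(sin (n t)) = cos (i (\<pi>/2 - n t))\<close>, so \<open>T\<^sub>i(sin (n t)) T\<^sub>j(sin ((n+p) t))\<close> is a sum of two
  cosines of frequencies \<open>i n \<plusminus> j (n+p)\<close>, and only frequency zero survives averaging over a
  period. By coprimality, \<open>i n = j (n+p)\<close> forces \<open>(i, j) = k (n+p, n)\<close>, and the degree bound
  leaves \<open>k \<le> 3\<close>; the phase \<open>cos (k p \<pi>/2)\<close> vanishes for odd \<open>k\<close> since \<open>p\<close> is odd, and is
  \<open>-1\<close> for \<open>k = 2\<close>. Hence the curve average of \<open>P\<close> is \<open>c\<^sub>0\<^sub>0 - c\<^sub>a\<^sub>b / 2 = c\<^sub>0\<^sub>0\<close>.\<close>

lemma cheb_0 [simp]: "cheb 0 x = 1"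
  by (simp add: cheb_def)

lemma abs_cheb_le_1: "\<bar>cheb i x\<bar> \<le> 1"
  by (simp add: cheb_def)

lemma continuous_on_cheb: "continuous_on {-1<..<1} (cheb k)"
  unfolding cheb_def by (auto intro!: continuous_intros)

lemma cos_Suc_Suc_mult:
  "cos (real (Suc (Suc i)) * a) = 2 * cos a * cos (real (Suc i) * a) - cos (real i * a)"
proof -
  have "cos (real (Suc (Suc i)) * a) = cos (real (Suc i) * a + a)"
    by (simp add: algebra_simps)
  also have "\<dots> = 2 * cos a * cos (real (Suc i) * a) - cos (real (Suc i) * a - a)"
    by (simp add: cos_add cos_diff)
  also have "real (Suc i) * a - a = real i * a"
    by (simp add: algebra_simps)
  finally show ?thesis .
qed

lemma cheb_Suc_Suc:
  assumes "-1 \<le> x" "x \<le> 1"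
  shows "cheb (Suc (Suc i)) x = 2 * x * cheb (Suc i) x - cheb i x"
  using cos_Suc_Suc_mult[of i "arccos x"] assms by (simp add: cheb_def cos_arccos)

lemma cheb_cos: "cheb i (cos t) = cos (real i * t)"
proof -
  have "cheb i (cos t) = cos (real i * t) \<and> cheb (Suc i) (cos t) = cos (real (Suc i) * t)"
  proof (induction i)
    case 0
    then show ?case by (simp add: cheb_def cos_arccos)
  next
    case (Suc i)
    have "cheb (Suc (Suc i)) (cos t) = 2 * cos t * cos (real (Suc i) * t) - cos (real i * t)"
      using Suc by (simp add: cheb_Suc_Suc)
    also have "\<dots> = cos (real (Suc (Suc i)) * t)"
      by (simp only: cos_Suc_Suc_mult)
    finally show ?case using Suc by simp
  qed
  then show ?thesis ..
qed

lemma cheb_sin: "cheb i (sin t) = cos (real i * (pi / 2 - t))"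
  using cheb_cos[of i "pi / 2 - t"] by (simp add: cos_diff)

lemma cheb_mult: "cheb i x * cheb k x = (cheb (i + k) x + cheb (max i k - min i k) x) / 2"
proof -
  have "cos (real i * arccos x - real k * arccos x) = cos (real (max i k - min i k) * arccos x)"
  proof (cases "i \<le> k")
    case True
    then have "real i * arccos x - real k * arccos x = - (real (max i k - min i k) * arccos x)"
      by (simp add: of_nat_diff algebra_simps)
    then show ?thesis by (simp only: cos_minus)
  next
    case False
    then show ?thesis by (simp add: of_nat_diff algebra_simps)
  qed
  then show ?thesis
    unfolding cheb_def cos_times_cos by (simp add: algebra_simps)
qed

lemma tendsto_at_ends_of_continuous_on_Icc:
  fixes F :: "real \<Rightarrow> 'a::topological_space"
  assumes "a < b" and "continuous_on {a..b} F"
  shows "(F \<longlongrightarrow> F a) (at_right a)" and "(F \<longlongrightarrow> F b) (at_left b)"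
proof -
  have "(F \<longlongrightarrow> F a) (at a within {a..b})" and "(F \<longlongrightarrow> F b) (at b within {a..b})"
    using assms by (auto simp: continuous_on_def)
  then show "(F \<longlongrightarrow> F a) (at_right a)" and "(F \<longlongrightarrow> F b) (at_left b)"
    using assms(1) by (simp_all add: at_within_Icc_at_right at_within_Icc_at_left)
qed

lemma interval_integral_FTC_open:
  fixes f F :: "real \<Rightarrow> real"
  assumes "a < b" and "continuous_on {a..b} F"
    and "\<And>x. a < x \<Longrightarrow> x < b \<Longrightarrow> DERIV F x :> f x"
    and "\<And>x. a < x \<Longrightarrow> x < b \<Longrightarrow> isCont f x"
    and "set_integrable lborel {a<..<b} f"
  shows "(LBINT x=ereal a..ereal b. f x) = F b - F a"
  using assms tendsto_at_ends_of_continuous_on_Icc[OF assms(1,2)]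
  by (intro interval_integral_FTC_integrable[where F=F])
     (auto simp: has_real_derivative_iff_has_vector_derivative[symmetric] ereal_tendsto_simps1)

lemma set_integrable_cheb_weight: "set_integrable lborel {-1<..<1} (\<lambda>x::real. 1 / sqrt (1 - x\<^sup>2))"
proof -
  have "set_integrable lborel (einterval (ereal (-1)) (ereal 1)) (\<lambda>x::real. 1 / sqrt (1 - x\<^sup>2))"
  proof (rule interval_integral_FTC_nonneg[where F = "\<lambda>x. - arccos x"])
    show "(((\<lambda>x. - arccos x) \<circ> real_of_ereal) \<longlongrightarrow> - arccos (-1)) (at_right (ereal (-1)))"
      and "(((\<lambda>x. - arccos x) \<circ> real_of_ereal) \<longlongrightarrow> - arccos 1) (at_left (ereal 1))"
      using tendsto_at_ends_of_continuous_on_Icc[of "-1" 1 "\<lambda>x. - arccos x"]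
      by (auto simp: ereal_tendsto_simps1 intro!: continuous_intros continuous_on_arccos')
  qed (auto intro!: derivative_eq_intros continuous_intros
            simp: divide_simps abs_square_less_1 abs_square_eq_1)
  then show ?thesis by simp
qed

lemma set_integrable_cheb_times_weight:
  "set_integrable lborel {-1<..<1} (\<lambda>x. cheb k x * (1 / sqrt (1 - x\<^sup>2)))"
proof (rule set_integrable_bound[OF set_integrable_cheb_weight])
  have "continuous_on {-1<..<1} (\<lambda>x::real. 1 / sqrt (1 - x\<^sup>2))"
    by (auto intro!: continuous_intros simp: abs_square_less_1 power2_eq_1_iff)
  then show "set_borel_measurable lborel {-1<..<1} (\<lambda>x. cheb k x * (1 / sqrt (1 - x\<^sup>2)))"
    unfolding set_borel_measurable_def measurable_lborel2
    by (intro borel_measurable_continuous_on_indicator continuous_on_mult continuous_on_cheb) simp_all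
  show "AE x in lborel. x \<in> {-1<..<1} \<longrightarrow>
      norm (cheb k x * (1 / sqrt (1 - x\<^sup>2))) \<le> norm (1 / sqrt (1 - x\<^sup>2))"
    by (intro AE_I2) (simp add: divide_right_mono abs_cheb_le_1)
qed

lemma integral_cheb_times_weight:
  "(LINT x:{-1<..<1}|lborel. cheb k x * (1 / sqrt (1 - x\<^sup>2))) = (if k = 0 then pi else 0)"
proof -
  define F where "F x = (if k = 0 then - arccos x else - sin (real k * arccos x) / real k)" for x
  have "(LBINT x=ereal (-1)..ereal 1. cheb k x * (1 / sqrt (1 - x\<^sup>2))) = F 1 - F (-1)"
  proof (rule interval_integral_FTC_open[OF _ _ _ _ set_integrable_cheb_times_weight])
    show "continuous_on {-1..1} F"
      unfolding F_def by (cases "k = 0") (auto intro!: continuous_intros)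
    fix x :: real assume x: "-1 < x" "x < 1"
    show "DERIV F x :> cheb k x * (1 / sqrt (1 - x\<^sup>2))"
    proof (cases "k = 0")
      case True
      then show ?thesis using x unfolding F_def cheb_def
        by (auto intro!: derivative_eq_intros simp: divide_simps)
    next
      case False
      have "DERIV (\<lambda>x. - sin (real k * arccos x) / real k) x :>
          - (cos (real k * arccos x) * (real k * inverse (- sqrt (1 - x\<^sup>2)))) / real k"
        by (intro derivative_eq_intros DERIV_arccos[OF x]) (use x False in auto)
      moreover have "F = (\<lambda>x. - sin (real k * arccos x) / real k)"
        using False by (simp add: F_def fun_eq_iff)
      ultimately show ?thesis
        using False by (simp add: cheb_def field_simps)
    qed
    show "isCont (\<lambda>x. cheb k x * (1 / sqrt (1 - x\<^sup>2))) x"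
      using x unfolding cheb_def
      by (auto intro!: continuous_intros isCont_arccos simp: abs_square_less_1 power2_eq_1_iff)
  qed simp
  also have "\<dots> = (if k = 0 then pi else 0)"
    by (simp add: F_def sin_npi_int)
  finally show ?thesis
    by (simp add: interval_lebesgue_integral_def)
qed

definition cheb_gram :: "nat \<Rightarrow> nat \<Rightarrow> real" where
  "cheb_gram i k = (if i \<noteq> k then 0 else if i = 0 then pi else pi / 2)"

text \<open>Open and closed interval give the same integrals: the weight takes the junk value
  \<open>1 / 0 = 0\<close> at \<open>\<plusminus>1\<close>.\<close>

lemma cheb_orthogonality:
  shows "set_integrable lborel {-1..1} (\<lambda>x. cheb i x * cheb k x * (1 / sqrt (1 - x\<^sup>2)))"
    and "(LINT x:{-1..1}|lborel. cheb i x * cheb k x * (1 / sqrt (1 - x\<^sup>2))) = cheb_gram i k"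
proof -
  let ?w = "\<lambda>x::real. 1 / sqrt (1 - x\<^sup>2)"
  let ?d = "max i k - min i k"
  have prod: "cheb i x * cheb k x * ?w x = (1/2) * (cheb (i + k) x * ?w x) + (1/2) * (cheb ?d x * ?w x)"
    for x by (simp add: cheb_mult add_divide_distrib)
  have ends: "indicator {-1..1} x *\<^sub>R (cheb i x * cheb k x * ?w x) =
      indicator {-1<..<1} x *\<^sub>R (cheb i x * cheb k x * ?w x)" for x
    by (auto simp: indicator_def)
  have "set_integrable lborel {-1<..<1} (\<lambda>x. cheb i x * cheb k x * ?w x)"
    unfolding prod by (intro set_integral_add(1) set_integrable_mult_right set_integrable_cheb_times_weight)
  then show "set_integrable lborel {-1..1} (\<lambda>x. cheb i x * cheb k x * ?w x)"
    unfolding set_integrable_def ends .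
  have "(LINT x:{-1<..<1}|lborel. cheb i x * cheb k x * ?w x) =
      (1/2) * (LINT x:{-1<..<1}|lborel. cheb (i + k) x * ?w x) +
      (1/2) * (LINT x:{-1<..<1}|lborel. cheb ?d x * ?w x)"
    unfolding prod
    by (simp only: set_integral_add(2) set_integrable_mult_right set_integrable_cheb_times_weight
          set_integral_mult_right)
  also have "\<dots> = cheb_gram i k"
    unfolding integral_cheb_times_weight cheb_gram_def by auto
  finally show "(LINT x:{-1..1}|lborel. cheb i x * cheb k x * ?w x) = cheb_gram i k"
    unfolding set_lebesgue_integral_def ends .
qed

lemma (in pair_sigma_finite)
  fixes f g :: "_ \<Rightarrow> real"
  assumes f: "integrable M1 f" and g: "integrable M2 g"
  shows integrable_mult_fst_snd: "integrable (M1 \<Otimes>\<^sub>M M2) (\<lambda>z. f (fst z) * g (snd z))"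
    and integral_mult_fst_snd:
      "(\<integral>z. f (fst z) * g (snd z) \<partial>(M1 \<Otimes>\<^sub>M M2)) = integral\<^sup>L M1 f * integral\<^sup>L M2 g"
proof -
  have [measurable]: "f \<in> borel_measurable M1" "g \<in> borel_measurable M2"
    using f g by (simp_all add: borel_measurable_integrable)
  show int: "integrable (M1 \<Otimes>\<^sub>M M2) (\<lambda>z. f (fst z) * g (snd z))"
  proof (rule Fubini_integrable)
    have "(\<lambda>x. \<integral>y. norm (f (fst (x, y)) * g (snd (x, y))) \<partial>M2) = (\<lambda>x. norm (f x) * (\<integral>y. norm (g y) \<partial>M2))"
      by (simp add: abs_mult)
    then show "integrable M1 (\<lambda>x. \<integral>y. norm (f (fst (x, y)) * g (snd (x, y))) \<partial>M2)"
      using f by (simp add: integrable_norm)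
  qed (use g in simp_all)
  show "(\<integral>z. f (fst z) * g (snd z) \<partial>(M1 \<Otimes>\<^sub>M M2)) = integral\<^sup>L M1 f * integral\<^sup>L M2 g"
    using integral_fst'[OF int] by simp
qed

lemma cheb_tensor_orthogonality:
  fixes i j a b :: nat
  defines "h \<equiv> \<lambda>z. cheb i (fst z) * cheb j (snd z) * (cheb a (fst z) * cheb b (snd z)) *
                   cheb_weight (fst z) (snd z)"
  shows "set_integrable lborel ({-1..1} \<times> {-1..1}) h"
    and "(LINT z:{-1..1} \<times> {-1..1}|lborel. h z) = cheb_gram i a * cheb_gram j b"
proof -
  define f where "f x = indicator {-1..1} x * (cheb i x * cheb a x * (1 / sqrt (1 - x\<^sup>2)))" for x :: real
  define g where "g y = indicator {-1..1} y * (cheb j y * cheb b y * (1 / sqrt (1 - y\<^sup>2)))" for y :: real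
  have f: "integrable lborel f" and g: "integrable lborel g"
    using cheb_orthogonality(1)[of i a] cheb_orthogonality(1)[of j b]
    by (simp_all add: f_def[abs_def] g_def[abs_def] set_integrable_def)
  have split: "(\<lambda>z. indicator ({-1..1} \<times> {-1..1}) z *\<^sub>R h z) = (\<lambda>z. f (fst z) * g (snd z))"
    by (auto simp: fun_eq_iff h_def f_def g_def indicator_times cheb_weight_def)
  show "set_integrable lborel ({-1..1} \<times> {-1..1}) h"
    using lborel_pair.integrable_mult_fst_snd[OF f g]
    unfolding set_integrable_def split lborel_prod .
  have "(LINT z:{-1..1} \<times> {-1..1}|lborel. h z) = integral\<^sup>L lborel f * integral\<^sup>L lborel g"
    using lborel_pair.integral_mult_fst_snd[OF f g]
    unfolding set_lebesgue_integral_def split lborel_prod .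
  also have "\<dots> = cheb_gram i a * cheb_gram j b"
    using cheb_orthogonality(2)[of i a] cheb_orthogonality(2)[of j b]
    by (simp add: f_def[abs_def] g_def[abs_def] set_lebesgue_integral_def)
  finally show "(LINT z:{-1..1} \<times> {-1..1}|lborel. h z) = cheb_gram i a * cheb_gram j b" .
qed

lemma set_integral_sum_of_real:
  fixes g :: "'i \<Rightarrow> 'a \<Rightarrow> real" and c :: "'i \<Rightarrow> complex"
  assumes "\<And>s. s \<in> S \<Longrightarrow> set_integrable M A (g s)"
  shows "(LINT z:A|M. \<Sum>s\<in>S. c s * complex_of_real (g s z)) =
      (\<Sum>s\<in>S. c s * complex_of_real (LINT z:A|M. g s z))"
proof -
  have indicator_inside: "(\<lambda>z. indicator A z *\<^sub>R (\<Sum>s\<in>S. c s * complex_of_real (g s z))) =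
      (\<lambda>z. \<Sum>s\<in>S. c s * complex_of_real (indicator A z *\<^sub>R g s z))"
    by (auto simp: fun_eq_iff scaleR_sum_right split: split_indicator)
  have "integrable M (\<lambda>z. c s * complex_of_real (indicator A z *\<^sub>R g s z))" if "s \<in> S" for s
    using assms[OF that] unfolding set_integrable_def
    by (intro integrable_mult_right integrable_of_real)
  then have "(LINT z:A|M. \<Sum>s\<in>S. c s * complex_of_real (g s z)) =
      (\<Sum>s\<in>S. \<integral>z. c s * complex_of_real (indicator A z *\<^sub>R g s z) \<partial>M)"
    unfolding set_lebesgue_integral_def indicator_inside
    by (rule Bochner_Integration.integral_sum)
  then show ?thesis
    by (simp only: set_lebesgue_integral_def integral_mult_right_zero integral_complex_of_real)
qed

lemma integral_cheb_series_times_cheb: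
  fixes c :: "nat \<Rightarrow> nat \<Rightarrow> complex"
  assumes "finite S" and "(a, b) \<in> S"
  shows "(LINT z:{-1..1} \<times> {-1..1}|lborel.
      (\<Sum>(i, j)\<in>S. c i j * complex_of_real (cheb i (fst z) * cheb j (snd z))) *
      complex_of_real (cheb a (fst z) * cheb b (snd z)) * complex_of_real (cheb_weight (fst z) (snd z)))
    = c a b * complex_of_real (cheb_gram a a * cheb_gram b b)"
proof -
  define h where "h i j = (\<lambda>z::real \<times> real. cheb i (fst z) * cheb j (snd z) *
                   (cheb a (fst z) * cheb b (snd z)) * cheb_weight (fst z) (snd z))" for i j
  have "(LINT z:{-1..1} \<times> {-1..1}|lborel.
      (\<Sum>(i, j)\<in>S. c i j * complex_of_real (cheb i (fst z) * cheb j (snd z))) *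
      complex_of_real (cheb a (fst z) * cheb b (snd z)) * complex_of_real (cheb_weight (fst z) (snd z)))
    = (LINT z:{-1..1} \<times> {-1..1}|lborel. \<Sum>s\<in>S. c (fst s) (snd s) * complex_of_real (h (fst s) (snd s) z))"
    by (simp add: h_def sum_distrib_right case_prod_unfold mult.assoc)
  also have "\<dots> = (\<Sum>s\<in>S. c (fst s) (snd s) * complex_of_real (cheb_gram (fst s) a * cheb_gram (snd s) b))"
    by (subst set_integral_sum_of_real) (auto simp: h_def cheb_tensor_orthogonality)
  also have "\<dots> = (\<Sum>s\<in>S. if s = (a, b) then c a b * complex_of_real (cheb_gram a a * cheb_gram b b) else 0)"
    by (rule sum.cong) (auto simp: cheb_gram_def)
  also have "\<dots> = c a b * complex_of_real (cheb_gram a a * cheb_gram b b)"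
    using assms by simp
  finally show ?thesis .
qed

lemma integral_cos_affine_period:
  "(LBINT t=0..2 * pi. cos (c - real_of_int k * t)) = (if k = 0 then 2 * pi * cos c else 0)"
proof (cases "k = 0")
  case True
  then show ?thesis
    using interval_integral_const(2)[of "cos c" 0 "2 * pi"] by (simp add: zero_ereal_def)
next
  case False
  have "(LBINT t=ereal 0..ereal (2 * pi). cos (c - real_of_int k * t)) =
      - sin (c - real_of_int k * (2 * pi)) / real_of_int k - (- sin (c - real_of_int k * 0) / real_of_int k)"
    using False
    by (intro interval_integral_FTC_finite continuous_intros)
       (auto intro!: derivative_eq_intros simp: has_real_derivative_iff_has_vector_derivative[symmetric])
  moreover have "sin (c - real_of_int k * (2 * pi)) = sin c"
    using sin_int_2pin[of k] cos_int_2pin[of k] by (simp add: sin_diff mult.commute)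
  ultimately show ?thesis
    using False by (simp add: zero_ereal_def)
qed

lemma integral_cheb_sin_product:
  fixes n m i j :: nat
  defines "k1 \<equiv> int i * int n - int j * int m" and "k2 \<equiv> int i * int n + int j * int m"
  shows "(LBINT t=0..2 * pi. cheb i (sin (real n * t)) * cheb j (sin (real m * t))) =
     pi * ((if k1 = 0 then cos ((real i - real j) * (pi / 2)) else 0) +
           (if k2 = 0 then cos ((real i + real j) * (pi / 2)) else 0))"
proof -
  define c1 where "c1 = (real i - real j) * (pi / 2)"
  define c2 where "c2 = (real i + real j) * (pi / 2)"
  have product_to_sum: "(\<lambda>t. cheb i (sin (real n * t)) * cheb j (sin (real m * t))) =
      (\<lambda>t. cos (c1 - real_of_int k1 * t) / 2 + cos (c2 - real_of_int k2 * t) / 2)"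
  proof
    fix t
    have "real i * (pi / 2 - real n * t) - real j * (pi / 2 - real m * t) = c1 - real_of_int k1 * t"
      and "real i * (pi / 2 - real n * t) + real j * (pi / 2 - real m * t) = c2 - real_of_int k2 * t"
      by (simp_all add: c1_def c2_def k1_def k2_def field_simps)
    then show "cheb i (sin (real n * t)) * cheb j (sin (real m * t)) =
        cos (c1 - real_of_int k1 * t) / 2 + cos (c2 - real_of_int k2 * t) / 2"
      unfolding cheb_sin cos_times_cos by simp
  qed
  have integrable:
    "interval_lebesgue_integrable lborel 0 (ereal (2 * pi)) (\<lambda>t. cos (c - real_of_int k * t) / 2)" for c k
    unfolding zero_ereal_def by (rule interval_integrable_isCont) (auto intro!: continuous_intros)
  show ?thesis
    unfolding product_to_sum interval_lebesgue_integral_add(2)[OF integrable integrable]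
      interval_lebesgue_integral_divide integral_cos_affine_period
    by (simp add: c1_def c2_def field_simps)
qed

lemma resonant_index_pair:
  fixes n p i j :: nat
  assumes "n > 0" and "coprime n (n + p)" and "i * n = j * (n + p)"
  obtains k where "i = k * (n + p)" and "j = k * n"
proof -
  have "n dvd j"
    using assms(2,3) by (metis coprime_commute coprime_dvd_mult_left_iff dvd_triv_right)
  then obtain k where "j = k * n"
    by (metis dvdE mult.commute)
  moreover from this have "i * n = k * (n + p) * n"
    using assms(3) by (simp add: algebra_simps)
  then have "i = k * (n + p)"
    using assms(1) by simp
  ultimately show thesis by (rule that[rotated])
qed

lemma integral_cheb_lissajous:
  fixes n p i j :: nat
  assumes "n > 0" and "odd p" and "coprime n (n + p)" and "i + j \<le> 8 * n + 4 * p - 1"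
  shows "(LBINT t=0..2 * pi. cheb i (sin (real n * t)) * cheb j (sin (real (n + p) * t))) =
    (if i = 0 \<and> j = 0 then 2 * pi else if i = 2 * (n + p) \<and> j = 2 * n then - pi else 0)"
proof (cases "i = 0 \<and> j = 0")
  case True
  then show ?thesis unfolding integral_cheb_sin_product by simp
next
  case nonconstant: False
  have sum_frequency: "int i * int n + int j * int (n + p) \<noteq> 0"
    using nonconstant assms(1) by (auto simp: add_nonneg_eq_0_iff)
  show ?thesis
  proof (cases "i * n = j * (n + p)")
    case False
    then have "int i * int n - int j * int (n + p) \<noteq> 0"
      by (metis eq_iff_diff_eq_0 of_nat_eq_iff of_nat_mult)
    moreover have "\<not> (i = 2 * (n + p) \<and> j = 2 * n)"
      using False by auto
    ultimately show ?thesis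
      unfolding integral_cheb_sin_product using nonconstant sum_frequency by simp
  next
    case True
    then have difference_frequency: "int i * int n - int j * int (n + p) = 0"
      by (metis eq_iff_diff_eq_0 of_nat_mult)
    obtain k where i: "i = k * (n + p)" and j: "j = k * n"
      using resonant_index_pair[OF assms(1,3) True] .
    have "k * (2 * n + p) < 4 * (2 * n + p)"
      using assms(1,4) unfolding i j by (simp add: algebra_simps)
    then have "k < 4" by (metis mult_less_cancel2)
    moreover have "k \<noteq> 0" using nonconstant i j by auto
    ultimately have "k = 2 \<or> odd k" by presburger
    then consider "k = 2" | "odd k" by blast
    then show ?thesis
    proof cases
      case 1
      have "cos ((real i - real j) * (pi / 2)) = cos (real p * pi)"
        using 1 i j by (simp add: algebra_simps)
      also have "\<dots> = -1"
        using assms(2) by (simp add: cos_npi)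
      finally show ?thesis
        unfolding integral_cheb_sin_product using 1 i j assms(1) difference_frequency sum_frequency by simp
    next
      case 2
      have "cos ((real i - real j) * (pi / 2)) = cos (real (k * p) * (pi / 2))"
        using i j by (simp add: algebra_simps)
      also have "\<dots> = 0"
        using 2 assms(2) cos_zero_iff by (metis even_mult_iff)
      finally show ?thesis
        unfolding integral_cheb_sin_product using 2 i j difference_frequency sum_frequency by auto
    qed
  qed
qed

lemma finite_pairs_sum_le: "finite {(i, j :: nat). i + j \<le> N}"
  by (rule finite_subset[of _ "{..N} \<times> {..N}"]) auto

lemma integral_cheb_series_lissajous:
  fixes n p :: nat and c :: "nat \<Rightarrow> nat \<Rightarrow> complex"
  assumes "n > 0" and "odd p" and "coprime n (n + p)"
  defines "S \<equiv> {(i, j). i + j \<le> 8 * n + 4 * p - 1}"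
  shows "(LBINT t=0..2 * pi. (\<Sum>(i, j)\<in>S.
      c i j * complex_of_real (cheb i (sin (real n * t)) * cheb j (sin (real (n + p) * t)))))
    = complex_of_real (2 * pi) * c 0 0 - complex_of_real pi * c (2 * (n + p)) (2 * n)"
proof -
  define g where "g i j = (\<lambda>t. cheb i (sin (real n * t)) * cheb j (sin (real (n + p) * t)))" for i j
  define I where "I = einterval 0 (ereal (2 * pi))"
  have S: "finite S" "(0, 0) \<in> S" "(2 * (n + p), 2 * n) \<in> S"
    using assms(1) by (simp_all add: S_def finite_pairs_sum_le)
  have integral_I: "(LBINT t=0..2 * pi. f t) = (LINT t:I|lborel. f t)"
    for f :: "real \<Rightarrow> 'b::{banach, second_countable_topology}"
    by (simp add: interval_lebesgue_integral_def I_def)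
  have "interval_lebesgue_integrable lborel (ereal 0) (ereal (2 * pi)) (g i j)" for i j
    unfolding g_def by (rule interval_integrable_isCont) (auto simp: cheb_sin intro!: continuous_intros)
  then have "set_integrable lborel I (g i j)" for i j
    by (simp add: interval_lebesgue_integrable_def I_def zero_ereal_def)
  then have "(LBINT t=0..2 * pi. (\<Sum>(i, j)\<in>S.
      c i j * complex_of_real (cheb i (sin (real n * t)) * cheb j (sin (real (n + p) * t)))))
    = (\<Sum>s\<in>S. c (fst s) (snd s) * complex_of_real (LBINT t=0..2 * pi. g (fst s) (snd s) t))"
    unfolding integral_I case_prod_unfold
    by (subst set_integral_sum_of_real) (simp_all add: g_def)
  also have "\<dots> = (\<Sum>s\<in>S. (if s = (0, 0) then complex_of_real (2 * pi) * c 0 0 else 0) -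
      (if s = (2 * (n + p), 2 * n) then complex_of_real pi * c (2 * (n + p)) (2 * n) else 0))"
  proof (rule sum.cong[OF refl])
    fix s assume "s \<in> S"
    then obtain i j where s: "s = (i, j)" and degree: "i + j \<le> 8 * n + 4 * p - 1"
      by (auto simp: S_def)
    have "(LBINT t=0..2 * pi. g i j t) =
        (if i = 0 \<and> j = 0 then 2 * pi else if i = 2 * (n + p) \<and> j = 2 * n then - pi else 0)"
      unfolding g_def by (rule integral_cheb_lissajous[OF assms(1-3) degree])
    then show "c (fst s) (snd s) * complex_of_real (LBINT t=0..2 * pi. g (fst s) (snd s) t) =
        (if s = (0, 0) then complex_of_real (2 * pi) * c 0 0 else 0) -
        (if s = (2 * (n + p), 2 * n) then complex_of_real pi * c (2 * (n + p)) (2 * n) else 0)"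
      using assms(1) by (auto simp: s)
  qed
  also have "\<dots> = complex_of_real (2 * pi) * c 0 0 - complex_of_real pi * c (2 * (n + p)) (2 * n)"
    using S by (simp add: sum_subtractf)
  finally show ?thesis .
qed

theorem lemma1:
  fixes n p :: nat and P :: "real \<Rightarrow> real \<Rightarrow> complex"
  assumes "n > 0" and "p > 0" and "odd p" and "coprime n (n + p)"
    and "P \<in> PiN (8 * n + 4 * p - 1)"
    and "cheb_ip P (\<lambda>x y. complex_of_real (cheb (2 * (n + p)) x * cheb (2 * n) y)) = 0"
  shows "complex_of_real (1 / pi\<^sup>2) *
      (LINT z : {-1..1} \<times> {-1..1} | lborel.
         P (fst z) (snd z) * complex_of_real (cheb_weight (fst z) (snd z)))
    = complex_of_real (1 / (2 * pi)) *
      (LBINT t=0..2 * pi. P (fst (gamma_np n p t)) (snd (gamma_np n p t)))"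
proof -
  define S where "S = {(i, j). i + j \<le> 8 * n + 4 * p - 1}"
  define a where "a = 2 * (n + p)"
  define b where "b = 2 * n"
  obtain c where P: "P = (\<lambda>x y. \<Sum>(i, j)\<in>S. c i j * complex_of_real (cheb i x * cheb j y))"
    using assms(5) unfolding PiN_def S_def by blast
  have S: "finite S" "(0, 0) \<in> S" "(a, b) \<in> S"
    using assms(1) by (simp_all add: S_def a_def b_def finite_pairs_sum_le)
  have "0 = cheb_ip P (\<lambda>x y. complex_of_real (cheb a x * cheb b y))"
    using assms(6) by (simp add: a_def b_def)
  also have "\<dots> = complex_of_real (1 / pi\<^sup>2) * (c a b * complex_of_real (cheb_gram a a * cheb_gram b b))"
    using integral_cheb_series_times_cheb[OF S(1,3)] by (simp add: cheb_ip_def P)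
  finally have "c a b = 0"
    using assms(1) by (simp add: cheb_gram_def a_def b_def)
  moreover have "(LINT z : {-1..1} \<times> {-1..1} | lborel.
      P (fst z) (snd z) * complex_of_real (cheb_weight (fst z) (snd z))) = c 0 0 * complex_of_real (pi\<^sup>2)"
    using integral_cheb_series_times_cheb[OF S(1,2), of c] by (simp add: P cheb_gram_def power2_eq_square)
  moreover have "(LBINT t=0..2 * pi. P (fst (gamma_np n p t)) (snd (gamma_np n p t))) =
      complex_of_real (2 * pi) * c 0 0 - complex_of_real pi * c a b"
    using integral_cheb_series_lissajous[OF assms(1,3,4)]
    by (simp add: P S_def gamma_np_def a_def b_def)
  ultimately show ?thesis
    by simp
qed

end
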